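(* Let $G$ be a cycle of cliques. Then $Z_+(G)\le |V(G)|-\operatorname{cc}(G)+2$.
   Context: $\operatorname{cc}(G)$ is the minimum number of cliques needed to cover all edges of $G$. A min-max clique covering is a clique covering of size $\operatorname{cc}(G)$ consisting of maximal cliques. $G$ is a cycle of cliques if it has a min-max clique covering $\{C_1,\dots,C_\ell\}$ such that $C_i\cap C_{i+1}\neq\emptyset$ for $i=1,\dots,\ell-1$ and $C_1\cap C_\ell\neq\emptyset$, while all other pairwise intersections $C_i\cap C_j$ are empty. $Z_+(G)$ is the positive zero forcing number: the minimum size of a set $B$ of initially black vertices such that repeated application of the rule "let $W_1,\dots,W_k$ be the vertex sets of components of $G$ minus the black vertices; a black vertex $u$ whose only white neighbour in the subgraph induced by $W_i\cup(\text{black vertices})$ is $w$ may turn $w$ black" eventually makes all vertices black. *)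

theory Defs
  imports Main
begin

definition graph :: "'a set \<Rightarrow> 'a set set \<Rightarrow> bool" where
  "graph V E \<longleftrightarrow> finite V \<and> (\<forall>e\<in>E. e \<subseteq> V \<and> card e = 2)"

definition clique :: "'a set \<Rightarrow> 'a set set \<Rightarrow> 'a set \<Rightarrow> bool" where
  "clique V E C \<longleftrightarrow> C \<subseteq> V \<and> (\<forall>u\<in>C. \<forall>v\<in>C. u \<noteq> v \<longrightarrow> {u, v} \<in> E)"

definition maximal_clique :: "'a set \<Rightarrow> 'a set set \<Rightarrow> 'a set \<Rightarrow> bool" where
  "maximal_clique V E C \<longleftrightarrow> clique V E C \<and> (\<forall>D. clique V E D \<and> C \<subseteq> D \<longrightarrow> D = C)"

definition clique_covering :: "'a set \<Rightarrow> 'a set set \<Rightarrow> 'a set set \<Rightarrow> bool" where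
  "clique_covering V E \<C> \<longleftrightarrow> finite \<C> \<and> (\<forall>C\<in>\<C>. clique V E C) \<and> (\<forall>e\<in>E. \<exists>C\<in>\<C>. e \<subseteq> C)"

definition cc :: "'a set \<Rightarrow> 'a set set \<Rightarrow> nat" where
  "cc V E = (LEAST k. \<exists>\<C>. clique_covering V E \<C> \<and> card \<C> = k)"

definition cycle_of_cliques :: "'a set \<Rightarrow> 'a set set \<Rightarrow> bool" where
  "cycle_of_cliques V E \<longleftrightarrow>
     (\<exists>Cs. Cs \<noteq> [] \<and> distinct Cs \<and> length Cs = cc V E \<and>
        clique_covering V E (set Cs) \<and> (\<forall>C\<in>set Cs. maximal_clique V E C) \<and>
        (\<forall>i<length Cs. \<forall>j<length Cs. i \<noteq> j \<longrightarrow>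
            (Cs ! i \<inter> Cs ! j \<noteq> {} \<longleftrightarrow>
               (j = Suc i mod length Cs \<or> i = Suc j mod length Cs))))"

definition white_comp :: "'a set \<Rightarrow> 'a set set \<Rightarrow> 'a set \<Rightarrow> 'a \<Rightarrow> 'a set" where
  "white_comp V E B w =
     {x. (\<lambda>a b. a \<in> V - B \<and> b \<in> V - B \<and> {a, b} \<in> E)\<^sup>*\<^sup>* w x}"

text \<open>Positive semidefinite forcing rule: black u forces white w if w is the only white
  neighbour of u in the subgraph induced by (component of w) \<union> B.\<close>
definition psd_force :: "'a set \<Rightarrow> 'a set set \<Rightarrow> 'a set \<Rightarrow> 'a \<Rightarrow> bool" where
  "psd_force V E B w \<longleftrightarrow> w \<in> V - B \<and>
     (\<exists>u\<in>B. {x \<in> white_comp V E B w. {u, x} \<in> E} = {w})"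

definition psd_step :: "'a set \<Rightarrow> 'a set set \<Rightarrow> 'a set \<Rightarrow> 'a set \<Rightarrow> bool" where
  "psd_step V E B B' \<longleftrightarrow> (\<exists>w. psd_force V E B w \<and> B' = insert w B)"

definition positive_zero_forcing_set :: "'a set \<Rightarrow> 'a set set \<Rightarrow> 'a set \<Rightarrow> bool" where
  "positive_zero_forcing_set V E B \<longleftrightarrow> B \<subseteq> V \<and> (psd_step V E)\<^sup>*\<^sup>* B V"

definition Zplus :: "'a set \<Rightarrow> 'a set set \<Rightarrow> nat" where
  "Zplus V E = (LEAST k. \<exists>B. positive_zero_forcing_set V E B \<and> card B = k)"

end

(*
  Choose a vertex v_i in each intersection C_i \<inter> C_(i+1) of consecutive cliques of the cycle
  C_0, ..., C_(l-1). For l \<ge> 4 no vertex lies in three of the cliques, as these would then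
  intersect pairwise; hence the v_i are distinct and induce an l-cycle. Make every vertex black
  except v_0, ..., v_(l-3): then v_(k-1) (indices mod l) has v_k as its only white neighbour, so
  the white vertices are forced one after another already by the classical zero forcing rule,
  which is a special case of the positive semidefinite one. For l \<le> 3 a single edge suffices.
*)

theory Submission
  imports Defs
begin

definition zero_forces :: "'a set \<Rightarrow> 'a set set \<Rightarrow> 'a set \<Rightarrow> 'a \<Rightarrow> 'a \<Rightarrow> bool" where
  "zero_forces V E W u w \<longleftrightarrow> u \<in> V - W \<and> {x \<in> W. {u, x} \<in> E} = {w}"

(* The white vertices in the order in which they are forced: the head is forced while the
   whole list is still white. *)
fun forcing_list :: "'a set \<Rightarrow> 'a set set \<Rightarrow> 'a list \<Rightarrow> bool" where
  "forcing_list V E [] \<longleftrightarrow> True"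
| "forcing_list V E (w # ws) \<longleftrightarrow> (\<exists>u. zero_forces V E (set (w # ws)) u w) \<and> forcing_list V E ws"

lemma white_comp_subset: "white_comp V E B w \<subseteq> insert w (V - B)"
proof
  fix x assume "x \<in> white_comp V E B w"
  then have "(\<lambda>a b. a \<in> V - B \<and> b \<in> V - B \<and> {a, b} \<in> E)\<^sup>*\<^sup>* w x"
    by (simp add: white_comp_def)
  then show "x \<in> insert w (V - B)"
    by (induction rule: rtranclp_induct) auto
qed

lemma white_comp_self: "w \<in> white_comp V E B w"
  by (simp add: white_comp_def)

lemma psd_force_if_zero_forces:
  assumes "zero_forces V E (V - B) u w"
  shows "psd_force V E B w"
proof -
  have w: "w \<in> V - B" and u: "u \<in> B"
    using assms by (auto simp: zero_forces_def)
  have "{x \<in> white_comp V E B w. {u, x} \<in> E} = {w}"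
    using assms white_comp_subset[of V E B w] white_comp_self[of w V E B]
    by (auto simp: zero_forces_def)
  then show ?thesis
    using w u by (auto simp: psd_force_def)
qed

lemma psd_steps_if_forcing_list:
  assumes "set ws \<subseteq> V" "distinct ws" "forcing_list V E ws"
  shows "(psd_step V E)\<^sup>*\<^sup>* (V - set ws) V"
  using assms
proof (induction ws)
  case Nil
  then show ?case by simp
next
  case (Cons w ws)
  have "psd_force V E (V - set (w # ws)) w"
    using Cons.prems by (auto intro: psd_force_if_zero_forces simp: Diff_Diff_Int Int_absorb1)
  moreover have "insert w (V - set (w # ws)) = V - set ws"
    using Cons.prems by auto
  ultimately have "psd_step V E (V - set (w # ws)) (V - set ws)"
    unfolding psd_step_def by metis
  moreover have "(psd_step V E)\<^sup>*\<^sup>* (V - set ws) V"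
    using Cons by simp
  ultimately show ?case
    by (rule converse_rtranclp_into_rtranclp)
qed

lemma Zplus_add_length_le:
  assumes "finite V" "set ws \<subseteq> V" "distinct ws" "forcing_list V E ws"
  shows "Zplus V E + length ws \<le> card V"
proof -
  have "positive_zero_forcing_set V E (V - set ws)"
    using psd_steps_if_forcing_list[OF assms(2-4)]
    by (simp add: positive_zero_forcing_set_def)
  then have "Zplus V E \<le> card (V - set ws)"
    unfolding Zplus_def by (intro Least_le) blast
  also have "\<dots> = card V - length ws"
    using assms by (simp add: card_Diff_subset distinct_card)
  finally show ?thesis
    using assms by (metis card_mono distinct_card le_diff_conv2)
qed

lemma forcing_list_edge:
  assumes "{x, y} \<in> E" "x \<noteq> y" "x \<in> V"
  shows "forcing_list V E [y]"
  using assms by (auto simp: zero_forces_def)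

lemma forcing_list_map_upt:
  assumes "\<And>j. k \<le> j \<Longrightarrow> j < m \<Longrightarrow> \<exists>u. zero_forces V E (f ` {j..<m}) u (f j)"
  shows "forcing_list V E (map f [k..<m])"
  using assms
proof (induction "m - k" arbitrary: k)
  case 0
  then show ?case by simp
next
  case (Suc d)
  then have unfold: "map f [k..<m] = f k # map f [Suc k..<m]"
    by (simp add: upt_conv_Cons)
  then have whites: "set (f k # map f [Suc k..<m]) = f ` {k..<m}"
    by (metis set_map set_upt)
  have "forcing_list V E (map f [Suc k..<m])"
    using Suc by simp
  then show ?case
    unfolding unfold forcing_list.simps whites using Suc by simp
qed

lemma Suc_mod_neq: "1 < n \<Longrightarrow> i < n \<Longrightarrow> Suc i mod n \<noteq> i"
  by (auto simp: mod_Suc)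

lemma Suc_mod_inj: "i < n \<Longrightarrow> j < n \<Longrightarrow> Suc i mod n = Suc j mod n \<Longrightarrow> i = j"
  by (auto simp: mod_Suc split: if_splits)

lemma Suc_Suc_mod_neq: "2 < n \<Longrightarrow> i < n \<Longrightarrow> Suc (Suc i mod n) mod n \<noteq> i"
  by (auto simp: mod_Suc)

definition cyclically_adjacent :: "nat \<Rightarrow> nat \<Rightarrow> nat \<Rightarrow> bool" where
  "cyclically_adjacent n i j \<longleftrightarrow> j = Suc i mod n \<or> i = Suc j mod n"

lemma cyclically_adjacent_triangle_free:
  assumes "4 \<le> n" "i < n" "j < n" "k < n"
    and "cyclically_adjacent n i j" "cyclically_adjacent n j k" "cyclically_adjacent n i k"
  shows "i = j \<or> j = k \<or> i = k"
  using assms by (auto simp: cyclically_adjacent_def mod_Suc split: if_splits)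

lemma forcing_list_induced_cycle:
  assumes inj: "inj_on v {..<n}" and in_V: "v ` {..<n} \<subseteq> V"
    and adjacent: "\<And>i. i < n \<Longrightarrow> {v i, v (Suc i mod n)} \<in> E"
    and induced: "\<And>i j. i < n \<Longrightarrow> j < n \<Longrightarrow> i \<noteq> j \<Longrightarrow> {v i, v j} \<in> E \<Longrightarrow>
      cyclically_adjacent n i j"
  shows "forcing_list V E (map v [0..<n - 2])"
proof (rule forcing_list_map_upt)
  fix k assume "k < n - 2"
  define p where "p = (if k = 0 then n - 1 else k - 1)"
  have p: "p < n" "Suc p mod n = k" "p \<notin> {k..<n - 2}"
    using \<open>k < n - 2\<close> by (auto simp: p_def)
  have "v p \<notin> v ` {k..<n - 2}"
    using p by (subst inj_on_image_mem_iff[OF inj]) auto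
  moreover have "{x \<in> v ` {k..<n - 2}. {v p, x} \<in> E} = {v k}"
  proof (intro equalityI subsetI)
    fix x assume "x \<in> {x \<in> v ` {k..<n - 2}. {v p, x} \<in> E}"
    then obtain j where j: "k \<le> j" "j < n - 2" "x = v j" "{v p, v j} \<in> E"
      by auto
    have "p \<noteq> j" "p \<noteq> Suc j mod n"
      using j p(3) by (auto simp: p_def)
    then have "j = Suc p mod n"
      using induced[of p j] p(1) j unfolding cyclically_adjacent_def by linarith
    then show "x \<in> {v k}"
      using p j by simp
  next
    fix x assume "x \<in> {v k}"
    then show "x \<in> {x \<in> v ` {k..<n - 2}. {v p, x} \<in> E}"
      using adjacent[of p] p \<open>k < n - 2\<close> by auto
  qed
  ultimately show "\<exists>u. zero_forces V E (v ` {k..<n - 2}) u (v k)"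
    using in_V p by (auto simp: zero_forces_def)
qed

locale clique_cycle_cover =
  fixes V :: "'a set" and E :: "'a set set" and Cs :: "'a set list"
  assumes covering: "clique_covering V E (set Cs)"
    and length_ge_4: "4 \<le> length Cs"
    and meet_iff_adjacent: "\<And>i j. i < length Cs \<Longrightarrow> j < length Cs \<Longrightarrow> i \<noteq> j \<Longrightarrow>
      Cs ! i \<inter> Cs ! j \<noteq> {} \<longleftrightarrow> cyclically_adjacent (length Cs) i j"
begin

lemma Suc_mod_length: "Suc i mod length Cs < length Cs"
  using length_ge_4 by (intro mod_less_divisor) linarith

definition link :: "nat \<Rightarrow> 'a" where
  "link i = (SOME x. x \<in> Cs ! i \<inter> Cs ! (Suc i mod length Cs))"

lemma link_mem:
  assumes "i < length Cs"
  shows "link i \<in> Cs ! i \<inter> Cs ! (Suc i mod length Cs)"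
proof -
  have "Suc i mod length Cs \<noteq> i"
    using assms length_ge_4 by (intro Suc_mod_neq) auto
  then have "Cs ! i \<inter> Cs ! (Suc i mod length Cs) \<noteq> {}"
    using assms Suc_mod_length meet_iff_adjacent cyclically_adjacent_def by metis
  then show ?thesis
    unfolding link_def some_in_eq .
qed

lemma mem_clique_link:
  assumes "i < length Cs" "k < length Cs" "link i \<in> Cs ! k"
  shows "k = i \<or> k = Suc i mod length Cs"
proof (rule ccontr)
  let ?n = "length Cs" and ?s = "Suc i mod length Cs"
  assume k: "\<not> (k = i \<or> k = ?s)"
  have "Cs ! ?s \<inter> Cs ! k \<noteq> {}" "Cs ! i \<inter> Cs ! k \<noteq> {}"
    using assms link_mem[of i] by blast+
  then have "cyclically_adjacent ?n ?s k" "cyclically_adjacent ?n i k"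
    using meet_iff_adjacent[OF Suc_mod_length assms(2)] meet_iff_adjacent[OF assms(1,2)] k
    by auto
  moreover have "cyclically_adjacent ?n i ?s"
    by (simp add: cyclically_adjacent_def)
  ultimately show False
    using cyclically_adjacent_triangle_free[OF length_ge_4 assms(1) Suc_mod_length[of i] assms(2)] k
      Suc_mod_neq[of ?n i] assms(1) length_ge_4 by auto
qed

lemma inj_on_link: "inj_on link {..<length Cs}"
proof (rule inj_onI, rule ccontr)
  let ?n = "length Cs"
  fix i j assume ij: "i \<in> {..<?n}" "j \<in> {..<?n}" "link i = link j" "i \<noteq> j"
  then have j: "j = Suc i mod ?n"
    using link_mem[of j] mem_clique_link[of i j] by auto
  then have "Suc j mod ?n = i \<or> Suc j mod ?n = Suc i mod ?n"
    using ij link_mem[of j] mem_clique_link[of i "Suc j mod ?n"] Suc_mod_length by auto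
  then show False
    using j ij Suc_Suc_mod_neq[of ?n i] Suc_mod_inj[of j ?n i] length_ge_4 by auto
qed

lemma clique_nth: "i < length Cs \<Longrightarrow> clique V E (Cs ! i)"
  using covering by (auto simp: clique_covering_def)

lemma link_adjacent:
  assumes "i < length Cs"
  shows "{link i, link (Suc i mod length Cs)} \<in> E"
proof -
  let ?s = "Suc i mod length Cs"
  have "link i \<noteq> link ?s"
    using assms inj_on_link Suc_mod_length Suc_mod_neq[of "length Cs" i] length_ge_4
    by (auto dest: inj_onD)
  moreover have "link i \<in> Cs ! ?s" "link ?s \<in> Cs ! ?s"
    using assms link_mem Suc_mod_length by blast+
  ultimately show ?thesis
    using clique_nth[OF Suc_mod_length] by (auto simp: clique_def)
qed

lemma link_adjacentD:
  assumes "i < length Cs" "j < length Cs" "i \<noteq> j" "{link i, link j} \<in> E"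
  shows "cyclically_adjacent (length Cs) i j"
proof -
  obtain m where m: "m < length Cs" "{link i, link j} \<subseteq> Cs ! m"
    using covering assms(4) unfolding clique_covering_def by (metis in_set_conv_nth)
  then have "m = i \<or> m = Suc i mod length Cs" "m = j \<or> m = Suc j mod length Cs"
    using assms mem_clique_link by auto
  moreover have "Suc i mod length Cs \<noteq> Suc j mod length Cs"
    using assms Suc_mod_inj by blast
  ultimately show ?thesis
    using assms(3) by (auto simp: cyclically_adjacent_def)
qed

lemma Zplus_add_length_minus_2_le:
  assumes "finite V"
  shows "Zplus V E + (length Cs - 2) \<le> card V"
proof -
  have links_V: "link ` {..<length Cs} \<subseteq> V"
    using link_mem clique_nth by (force simp: clique_def)
  have "forcing_list V E (map link [0..<length Cs - 2])"
    using inj_on_link links_V link_adjacent link_adjacentD by (rule forcing_list_induced_cycle)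
  moreover have "distinct (map link [0..<length Cs - 2])"
    using inj_on_link by (auto simp: distinct_map elim: inj_on_subset)
  ultimately show ?thesis
    using Zplus_add_length_le[OF assms, of "map link [0..<length Cs - 2]"] links_V by fastforce
qed

end

lemma cc_no_edges: "cc V {} = 0"
  unfolding cc_def by (rule Least_eq_0, rule exI[of _ "{}"]) (simp add: clique_covering_def)

theorem mainTheorem8:
  fixes V :: "'a set" and E :: "'a set set"
  assumes "graph V E"
    and "cycle_of_cliques V E"
  shows "int (Zplus V E) \<le> int (card V) - int (cc V E) + 2"
proof -
  have "finite V"
    using assms(1) by (simp add: graph_def)
  obtain Cs where Cs: "Cs \<noteq> []" "length Cs = cc V E" "clique_covering V E (set Cs)"
    "\<And>i j. i < length Cs \<Longrightarrow> j < length Cs \<Longrightarrow> i \<noteq> j \<Longrightarrow>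
      Cs ! i \<inter> Cs ! j \<noteq> {} \<longleftrightarrow> cyclically_adjacent (length Cs) i j"
    using assms(2) unfolding cycle_of_cliques_def cyclically_adjacent_def by blast
  have "Zplus V E + (cc V E - 2) \<le> card V"
  proof (cases "4 \<le> length Cs")
    case True
    then interpret clique_cycle_cover V E Cs
      using Cs by unfold_locales auto
    show ?thesis
      using Zplus_add_length_minus_2_le \<open>finite V\<close> Cs(2) by simp
  next
    case False
    have "E \<noteq> {}"
      using Cs(1,2) cc_no_edges[of V] by auto
    then obtain x y where "{x, y} \<in> E" "x \<noteq> y" "x \<in> V" "y \<in> V"
      using assms(1) unfolding graph_def by (metis card_2_iff equals0I insert_subset)
    then have "Zplus V E + length [y] \<le> card V"
      by (intro Zplus_add_length_le \<open>finite V\<close> forcing_list_edge) auto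
    then show ?thesis
      using False Cs(2) by simp
  qed
  then show ?thesis
    by linarith
qed

end
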